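(* Let $\gamma>0$ and $m\ge1$. For each $y\in\{\pm1\}^m$ let $r_y\in\mathbb{R}^m$ satisfy $r_y[i]y[i]\ge\gamma$ for all $i\in[m]$, and let $R=\{r_y\mid y\in\{\pm1\}^m\}$. Then $\{\pm\gamma\}^m\subseteq\mathrm{conv}(R)$.
   Context: $\mathrm{conv}(R)$ denotes the convex hull of $R$. *)

theory Defs
  imports "HOL-Analysis.Analysis"
begin

end

theory Submission
  imports Defs
begin

(* The sign vectors y \<in> {-1,1}^m are finitely many, so conv(R) is a
   compact convex set, and a point x lies in it as soon as no linear functional
   separates x from R: for every direction a some point of R must have
   a-value at most that of x (separating hyperplane theorem).  Given a, pick
   the sign vector y that is +1 where a is non-positive and -1 elsewhere; the
   margin condition r_y[i] y[i] \<ge> \<gamma> then forces a[i] r_y[i] \<le> a[i] x[i] in every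
   coordinate whenever |x[i]| \<le> \<gamma>.  Hence the whole cube [-\<gamma>,\<gamma>]^m, and in
   particular its vertex set {\<plusminus>\<gamma>}^m, is contained in conv(R). *)

lemma in_convex_hull_if_not_separated:
  fixes S :: "'a::euclidean_space set" and x :: 'a
  assumes "finite S"
    and not_separated: "\<And>a. \<exists>p\<in>S. inner a p \<le> inner a x"
  shows "x \<in> convex hull S"
proof (rule ccontr)
  assume x_out: "x \<notin> convex hull S"
  have "closed (convex hull S)"
    using assms(1) by (intro compact_imp_closed finite_imp_compact_convex_hull)
  then obtain a b where "inner a x < b" and above: "\<forall>p\<in>convex hull S. b < inner a p"
    using separating_hyperplane_closed_point[OF convex_convex_hull _ x_out] by blast
  moreover obtain p where "p \<in> S" "inner a p \<le> inner a x"
    using not_separated by blast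
  ultimately show False
    using hull_inc[of p S] by fastforce
qed

lemma finite_vectors_with_entries_in:
  assumes "finite A"
  shows "finite {y :: 'a^'n. \<forall>j. y $ j \<in> A}"
proof (rule finite_subset)
  show "{y :: 'a^'n. \<forall>j. y $ j \<in> A} \<subseteq> (\<lambda>f. \<chi> j. f j) ` (UNIV \<rightarrow>\<^sub>E A)"
  proof
    fix y :: "'a^'n"
    assume "y \<in> {y. \<forall>j. y $ j \<in> A}"
    then show "y \<in> (\<lambda>f. \<chi> j. f j) ` (UNIV \<rightarrow>\<^sub>E A)"
      by (intro image_eqI[where x = "\<lambda>j. y $ j"]) auto
  qed
  show "finite ((\<lambda>f. \<chi> j. f j) ` (UNIV \<rightarrow>\<^sub>E A))"
    using assms by (intro finite_imageI finite_PiE) auto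
qed

lemma margin_coordinate_dominates:
  fixes a z x \<gamma> :: real
  assumes margin: "z * (if a \<le> 0 then 1 else -1) \<ge> \<gamma>"
    and x_bound: "\<bar>x\<bar> \<le> \<gamma>"
  shows "a * z \<le> a * x"
proof (cases "a \<le> 0")
  case True
  then have "x \<le> z" using margin x_bound by simp
  with True show ?thesis by (simp add: mult_left_mono_neg)
next
  case False
  then have "z \<le> x" using margin x_bound by simp
  with False show ?thesis by (simp add: mult_left_mono)
qed

lemma margin_vector_dominates:
  fixes a x :: "real^'m" and r :: "real^'m \<Rightarrow> real^'m" and \<gamma> :: real
  assumes margin: "\<And>y i. (\<forall>j. y $ j \<in> {-1, 1}) \<Longrightarrow> r y $ i * y $ i \<ge> \<gamma>"
    and cube: "\<And>i. \<bar>x $ i\<bar> \<le> \<gamma>"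
  shows "\<exists>y. (\<forall>j. y $ j \<in> {-1, 1}) \<and> inner a (r y) \<le> inner a x"
proof (intro exI conjI)
  define y :: "real^'m" where "y = (\<chi> i. if a $ i \<le> 0 then 1 else -1)"
  show y_sign: "\<forall>j. y $ j \<in> {-1, 1}"
    unfolding y_def by simp
  have "a $ i * r y $ i \<le> a $ i * x $ i" for i
    using margin[OF y_sign, of i] cube[of i]
    by (intro margin_coordinate_dominates) (simp_all add: y_def)
  then show "inner a (r y) \<le> inner a x"
    unfolding inner_vec_def inner_real_def by (intro sum_mono) (simp add: mult.commute)
qed

theorem mainTheorem8:
  fixes \<gamma> :: real
    and r :: "real^'m \<Rightarrow> real^'m"
  assumes "\<gamma> > 0"
    and "\<And>y i. (\<forall>j. y $ j \<in> {-1, 1}) \<Longrightarrow> r y $ i * y $ i \<ge> \<gamma>"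
  shows "{x :: real^'m. \<forall>i. x $ i \<in> {-\<gamma>, \<gamma>}}
           \<subseteq> convex hull (r ` {y. \<forall>j. y $ j \<in> {-1, 1}})"
proof
  fix x :: "real^'m"
  assume "x \<in> {x. \<forall>i. x $ i \<in> {-\<gamma>, \<gamma>}}"
  then have vertex: "x $ i \<in> {-\<gamma>, \<gamma>}" for i
    by simp
  have cube: "\<bar>x $ i\<bar> \<le> \<gamma>" for i
    using vertex[of i] \<open>\<gamma> > 0\<close> by auto
  show "x \<in> convex hull (r ` {y. \<forall>j. y $ j \<in> {-1, 1}})"
  proof (rule in_convex_hull_if_not_separated)
    show "finite (r ` {y :: real^'m. \<forall>j. y $ j \<in> {-1, 1}})"
      by (intro finite_imageI finite_vectors_with_entries_in) simp
    show "\<exists>p\<in>r ` {y. \<forall>j. y $ j \<in> {-1, 1}}. inner a p \<le> inner a x" for a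
      using margin_vector_dominates[OF assms(2) cube, of a] by blast
  qed
qed

end
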